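(* Let client $c$ hold a local dataset of $S_c\ge 1$ samples $(\mathbf{x}^p_c(i), s_c(i), y_c(i))$, $i=1,\dots,S_c$, where $\mathbf{x}^p_c(i)\in\mathbb{R}^{d-1}$ are public attributes, $s_c(i)\in\{0,1\}$ is a binary sensitive attribute and $y_c(i)\in\mathbb{R}$ is the target. Let $\theta=(\theta[:p],\theta[s])\in\mathbb{R}^{d-1}\times\mathbb{R}$ be a linear (least squares) regression model with $\theta[s]\neq 0$, predicting $\mathbf{x}^p_c(i)^T\theta[:p]+s_c(i)\theta[s]$, and let $$E_c=\frac{1}{S_c}\sum_{i=1}^{S_c}\big(y_c(i)-\mathbf{x}^p_c(i)^T\theta[:p]-s_c(i)\theta[s]\big)^2$$ be its mean squared error on the local dataset. Consider the model-based attribute inference attack which, for each $i$, outputs $$\hat s_c(i)\in\arg\min_{s\in\{0,1\}}\big(\mathbf{x}^p_c(i)^T\theta[:p]+s\,\theta[s]-y_c(i)\big)^2$$ (ties broken in favor of $1$). Then the accuracy of the attack, $\frac{1}{S_c}\,|\{i:\hat s_c(i)=s_c(i)\}|$, is at least $1-\frac{4E_c}{\theta[s]^2}$.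
   Context: The adversary knows $\theta$, and for every sample $i$ the public attributes $\mathbf{x}^p_c(i)$ and target $y_c(i)$, but not $s_c(i)$. *)

theory Defs
  imports "HOL-Analysis.Analysis"
begin

text \<open>Public attributes are vectors in R^m (m = d-1), represented as functions
  nat => real restricted to indices < m. The model theta = (thp, ths).\<close>

definition dotp :: "nat \<Rightarrow> (nat \<Rightarrow> real) \<Rightarrow> (nat \<Rightarrow> real) \<Rightarrow> real" where
  "dotp m x w = (\<Sum>j<m. x j * w j)"

definition lin_pred :: "nat \<Rightarrow> (nat \<Rightarrow> real) \<Rightarrow> real \<Rightarrow> (nat \<Rightarrow> real) \<Rightarrow> real \<Rightarrow> real" where
  "lin_pred m thp ths x s = dotp m x thp + s * ths"

definition mse :: "nat \<Rightarrow> nat \<Rightarrow> (nat \<Rightarrow> real) \<Rightarrow> real \<Rightarrow> (nat \<Rightarrow> nat \<Rightarrow> real)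
    \<Rightarrow> (nat \<Rightarrow> real) \<Rightarrow> (nat \<Rightarrow> real) \<Rightarrow> real" where
  "mse m S thp ths xp s y = (1 / real S) * (\<Sum>i=1..S. (y i - dotp m (xp i) thp - s i * ths)\<^sup>2)"

definition attack :: "nat \<Rightarrow> (nat \<Rightarrow> real) \<Rightarrow> real \<Rightarrow> (nat \<Rightarrow> real) \<Rightarrow> real \<Rightarrow> real" where
  "attack m thp ths x yv =
     (if (lin_pred m thp ths x 1 - yv)\<^sup>2 \<le> (lin_pred m thp ths x 0 - yv)\<^sup>2 then 1 else 0)"

definition attack_acc :: "nat \<Rightarrow> nat \<Rightarrow> (nat \<Rightarrow> real) \<Rightarrow> real \<Rightarrow> (nat \<Rightarrow> nat \<Rightarrow> real)
    \<Rightarrow> (nat \<Rightarrow> real) \<Rightarrow> (nat \<Rightarrow> real) \<Rightarrow> real" where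
  "attack_acc m S thp ths xp s y =
     real (card {i \<in> {1..S}. attack m thp ths (xp i) (y i) = s i}) / real S"

end

theory Submission
  imports Defs
begin

text \<open>If the attack misclassifies sample \<open>i\<close>, then the prediction with the wrong value of
  the sensitive attribute fits \<open>y i\<close> at least as well as the one with the true value. The two
  predictions differ by \<open>\<theta>[s]\<close>, so the true residual is at least \<open>|\<theta>[s]|/2\<close> and the squared
  error of sample \<open>i\<close> is at least \<open>\<theta>[s]\<^sup>2/4\<close>. Hence the number of misclassified samples is at
  most \<open>4 S E / \<theta>[s]\<^sup>2\<close>, a Markov-type counting bound.\<close>

lemma sq_diff_le_four_sq_if_sq_le:
  fixes u v :: real
  assumes "v\<^sup>2 \<le> u\<^sup>2"
  shows "(u - v)\<^sup>2 \<le> 4 * u\<^sup>2"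
proof -
  have "\<bar>v\<bar> \<le> \<bar>u\<bar>" using assms by (simp add: abs_le_square_iff)
  then have "\<bar>u - v\<bar> \<le> \<bar>2 * u\<bar>" by linarith
  then show ?thesis by (simp add: abs_le_square_iff power_mult_distrib)
qed

lemma card_filter_compl_le_sum:
  fixes g :: "'a \<Rightarrow> real"
  assumes "finite A"
    and "\<And>i. i \<in> A \<Longrightarrow> 0 \<le> g i"
    and "\<And>i. i \<in> A \<Longrightarrow> \<not> P i \<Longrightarrow> 1 \<le> g i"
  shows "real (card A) - real (card {i \<in> A. P i}) \<le> (\<Sum>i\<in>A. g i)"
proof -
  have "{i \<in> A. \<not> P i} = A - {i \<in> A. P i}" by blast
  then have "card {i \<in> A. \<not> P i} = card A - card {i \<in> A. P i}"
    using assms(1) by (simp add: card_Diff_subset)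
  moreover have "card {i \<in> A. P i} \<le> card A"
    using assms(1) by (simp add: card_mono)
  ultimately have "real (card A) - real (card {i \<in> A. P i}) = (\<Sum>i \<in> {i \<in> A. \<not> P i}. 1)"
    by simp
  also have "\<dots> \<le> (\<Sum>i \<in> {i \<in> A. \<not> P i}. g i)"
    by (rule sum_mono) (simp add: assms(3))
  also have "\<dots> \<le> (\<Sum>i\<in>A. g i)"
    by (rule sum_mono2) (use assms in auto)
  finally show ?thesis .
qed

lemma attack_wrong_imp_sq_le_four_residual:
  assumes "s \<in> {0, 1}" and "attack m thp ths x yv \<noteq> s"
  shows "ths\<^sup>2 \<le> 4 * (yv - dotp m x thp - s * ths)\<^sup>2"
proof -
  define r0 where "r0 = yv - dotp m x thp"
  define r1 where "r1 = yv - dotp m x thp - ths"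
  have attack_eq: "attack m thp ths x yv = (if r1\<^sup>2 \<le> r0\<^sup>2 then 1 else 0)"
    by (simp add: attack_def lin_pred_def r0_def r1_def power2_commute[of _ yv] algebra_simps)
  show ?thesis
  proof (cases "s = 1")
    case True
    then have "r0\<^sup>2 \<le> r1\<^sup>2" using assms(2) attack_eq by (auto split: if_splits)
    then have "(r1 - r0)\<^sup>2 \<le> 4 * r1\<^sup>2" by (rule sq_diff_le_four_sq_if_sq_le)
    then show ?thesis using True by (simp add: r0_def r1_def power2_commute)
  next
    case False
    then have "s = 0" using assms(1) by simp
    then have "r1\<^sup>2 \<le> r0\<^sup>2" using assms(2) attack_eq by (auto split: if_splits)
    then have "(r0 - r1)\<^sup>2 \<le> 4 * r0\<^sup>2" by (rule sq_diff_le_four_sq_if_sq_le)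
    then show ?thesis using \<open>s = 0\<close> by (simp add: r0_def r1_def)
  qed
qed

theorem proposition1:
  fixes m S :: nat and thp :: "nat \<Rightarrow> real" and ths :: real
    and xp :: "nat \<Rightarrow> nat \<Rightarrow> real" and s y :: "nat \<Rightarrow> real"
  assumes "S \<ge> 1"
    and "ths \<noteq> 0"
    and "\<forall>i\<in>{1..S}. s i \<in> {0, 1}"
  shows "attack_acc m S thp ths xp s y \<ge> 1 - 4 * mse m S thp ths xp s y / ths\<^sup>2"
proof -
  define correct where "correct = {i \<in> {1..S}. attack m thp ths (xp i) (y i) = s i}"
  define g where "g i = 4 * (y i - dotp m (xp i) thp - s i * ths)\<^sup>2 / ths\<^sup>2" for i
  define q where "q = 4 * mse m S thp ths xp s y / ths\<^sup>2"
  have misclassified: "1 \<le> g i"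
    if "i \<in> {1..S}" "attack m thp ths (xp i) (y i) \<noteq> s i" for i
    using that attack_wrong_imp_sq_le_four_residual assms(2,3) by (simp add: g_def)
  have "real S - real (card correct) \<le> (\<Sum>i=1..S. g i)"
    using card_filter_compl_le_sum[of "{1..S}" g] misclassified
    by (simp add: correct_def g_def)
  also have "(\<Sum>i=1..S. g i) = real S * q"
    using assms(1)
    by (simp add: g_def q_def mse_def sum_divide_distrib[symmetric] sum_distrib_left[symmetric])
  finally have "real S - real (card correct) \<le> real S * q" .
  then have "1 - q \<le> real (card correct) / real S"
    using assms(1) by (simp add: field_simps)
  then show ?thesis by (simp add: attack_acc_def correct_def q_def)
qed

end
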